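(* Let $\boldsymbol\phi(n,m,\alpha,\beta,l)\in\mathbb C^N$ satisfy the condition equation set (for all arguments, only the indicated variable shifted) $\sigma_1\boldsymbol\phi(n-1,\cdot,l)=\boldsymbol\phi(n,\cdot,l)-\boldsymbol\phi(n-1,\cdot,l+1)$, $\sigma_2\boldsymbol\phi(m-1,\cdot,l)=\boldsymbol\phi(m,\cdot,l)-\boldsymbol\phi(m-1,\cdot,l+1)$, $\sigma_3\boldsymbol\phi(\alpha-1,\cdot,l)=\boldsymbol\phi(\alpha,\cdot,l)-\boldsymbol\phi(\alpha-1,\cdot,l+1)$, $\sigma_4\boldsymbol\phi(\beta-1,\cdot,l)=\boldsymbol\phi(\beta,\cdot,l)-\boldsymbol\phi(\beta-1,\cdot,l+1)$, and $\boldsymbol K\boldsymbol\phi(l)=\boldsymbol\phi(l+4)-\epsilon_1\boldsymbol\phi(l+3)+\epsilon_2\boldsymbol\phi(l+2)-\epsilon_3\boldsymbol\phi(l+1)$ for a constant $N\times N$ matrix $\boldsymbol K$. Let $f'=|0,\dots,N-1|$, $g'=|0,\dots,N-2,N|$, $h'=|0,\dots,N-2,N+1|$, $s'=|0,\dots,N-3,N-1,N|$ (Casoratians of $\boldsymbol\phi$). Then $$\widetilde f'(\sigma_1\dot f'+\dot g')-(\sigma_1-\sigma_4)f'\widetilde{\dot f}'-(\sigma_4\widetilde f'+\widetilde g')\dot f'=0,\quad \widehat f'(\sigma_2\dot f'+\dot g')-(\sigma_2-\sigma_4)f'\widehat{\dot f}'-(\sigma_4\widehat f'+\widehat g')\dot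 f'=0,$$ $$\widetilde f'(\sigma_4^2\dot f'-\sigma_4\dot g'+\dot h')+\sigma_1\widetilde f'(\dot g'-\sigma_4\dot f')-(\sigma_1-\sigma_4)f'(\widetilde{\dot g}'-\sigma_4\widetilde{\dot f}')-\dot f'\widetilde h'=0,$$ $$\widehat f'(\sigma_4^2\dot f'-\sigma_4\dot g'+\dot h')+\sigma_2\widehat f'(\dot g'-\sigma_4\dot f')-(\sigma_2-\sigma_4)f'(\widehat{\dot g}'-\sigma_4\widehat{\dot f}')-\dot f'\widehat h'=0,$$ $$\widetilde f'(\sigma_1g'+h')-\widetilde g'(\sigma_1f'+g')+f'\widetilde s'=0,\qquad \widehat f'(\sigma_2g'+h')-\widehat g'(\sigma_2f'+g')+f'\widehat s'=0,$$ $$(\sigma_1-\sigma_2)(\widetilde f'\widehat f'-f'\widehat{\widetilde f}')+\widetilde f'\widehat g'-\widehat f'\widetilde g'=0,$$ $$\big[Q(\sigma_1,\sigma_2)f'\widehat{\widetilde{\dot f}}'+s'\widehat{\widetilde{\dot f}}'+(\sigma_1+\sigma_2+\epsilon_1)g'\widehat{\widetilde{\dot f}}'-((\sigma_1+\sigma_2+\epsilon_1)f'+g')(\widehat{\widetilde{\dot g}}'-\sigma_4\widehat{\widetilde{\dot f}}')+f'(\widehat{\widetilde{\dot h}}'-\sigma_4\widehat{\widetilde{\dot g}}'+\sigma_4^2\widehat{\widetilde{\dot f}}')\big](\sigma_1-\sigma_2)-R(\sigma_1,\sigma_4)\widetilde f'\widehat{\dot f}'+R(\sigma_2,\sigma_4)\widehat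 f'\widetilde{\dot f}'=0.$$
   Context: Fix $\alpha_1,\alpha_2,\alpha_3,\delta\in\mathbb C$ and pairwise distinct $p,q,a,b\in\mathbb C$. Put $\sigma_1=p-\delta$, $\sigma_2=q-\delta$, $\sigma_3=a-\delta$, $\sigma_4=b-\delta$; $\epsilon_1=4\delta-\alpha_3$, $\epsilon_2=6\delta^2-3\delta\alpha_3+\alpha_2$, $\epsilon_3=4\delta^3-3\delta^2\alpha_3+2\delta\alpha_2-\alpha_1$; $Q(x,y)=(x+y)^2-xy+\epsilon_1(x+y)+\epsilon_2$; $R(x,y)=(x+y)(x^2+y^2)+\epsilon_1((x+y)^2-xy)+\epsilon_2(x+y)+\epsilon_3$. Casoratian notation: $|l_1,\dots,l_N|=\det(\boldsymbol\phi(l_1),\dots,\boldsymbol\phi(l_N))$ with $\boldsymbol\phi(l)=\boldsymbol\phi(n,m,\alpha,\beta,l)$; a run "$0,\dots,j$" with $j<0$ is empty, and if the listed indices number more than $N$ the symbol is $0$. Shifts: $\widetilde F=F(n+1,m,\beta)$, $\widehat F=F(n,m+1,\beta)$, $\dot F=F(n,m,\beta+1)$, composed as needed. *)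

theory Defs
  imports Complex_Main "Jordan_Normal_Form.Determinant"
begin

definition casoratian ::
  "(int \<Rightarrow> int \<Rightarrow> int \<Rightarrow> int \<Rightarrow> int \<Rightarrow> complex vec) \<Rightarrow> nat \<Rightarrow> int list
    \<Rightarrow> int \<Rightarrow> int \<Rightarrow> int \<Rightarrow> int \<Rightarrow> complex" where
  "casoratian \<phi> N ls n m a b =
     (if length ls > N then 0 else det (mat_of_cols N (map (\<lambda>l. \<phi> n m a b l) ls)))"

definition eps1 :: "complex \<Rightarrow> complex \<Rightarrow> complex \<Rightarrow> complex \<Rightarrow> complex" where
  "eps1 a1 a2 a3 \<delta> = 4*\<delta> - a3"
definition eps2 :: "complex \<Rightarrow> complex \<Rightarrow> complex \<Rightarrow> complex \<Rightarrow> complex" where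
  "eps2 a1 a2 a3 \<delta> = 6*\<delta>^2 - 3*\<delta>*a3 + a2"
definition eps3 :: "complex \<Rightarrow> complex \<Rightarrow> complex \<Rightarrow> complex \<Rightarrow> complex" where
  "eps3 a1 a2 a3 \<delta> = 4*\<delta>^3 - 3*\<delta>^2*a3 + 2*\<delta>*a2 - a1"

definition Qpol :: "complex \<Rightarrow> complex \<Rightarrow> complex \<Rightarrow> complex \<Rightarrow> complex" where
  "Qpol e1 e2 x y = (x+y)^2 - x*y + e1*(x+y) + e2"
definition Rpol :: "complex \<Rightarrow> complex \<Rightarrow> complex \<Rightarrow> complex \<Rightarrow> complex \<Rightarrow> complex" where
  "Rpol e1 e2 e3 x y = (x+y)*(x^2+y^2) + e1*((x+y)^2 - x*y) + e2*(x+y) + e3"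

end

theory Submission
  imports Defs
begin

text \<open>Read the Casoratian with columns phi(0), ..., phi(N-1) as the determinant with these vectors as
  rows.  The condition equations say that a shift in n, m or beta replaces the row sequence w by
  k \<mapsto> sigma * w k + w (k+1), and the relation for K phi expresses the row w (k+4) through K and
  lower rows.  Every identity is then a Pluecker-type relation: border the rows w 0, ..., w N by the
  values at these rows of the linear functional "replace the last row of a (shifted) Casoratian";
  when this column is a linear combination of the others, the Laplace expansion along it vanishes.
  Evaluating the expansion, after rewriting shifted rows as combinations of unshifted ones, gives
  the bilinear identities.\<close>

definition det_rows :: "nat \<Rightarrow> (nat \<Rightarrow> nat \<Rightarrow> complex) \<Rightarrow> complex" where
  "det_rows n r = det (mat n n (\<lambda>(i, j). r i j))"

lemma det_rows_cong:
  "(\<And>i j. i < n \<Longrightarrow> j < n \<Longrightarrow> r i j = r' i j) \<Longrightarrow> det_rows n r = det_rows n r'"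
  unfolding det_rows_def by (rule arg_cong[of _ _ det], rule eq_matI, auto)

lemma det_rows_permutations:
  "det_rows n r = (\<Sum>p\<in>{p. p permutes {0..<n}}. signof p * (\<Prod>i=0..<n. r i (p i)))"
  unfolding det_rows_def det_def'[OF mat_carrier]
proof (rule sum.cong[OF refl])
  fix p assume "p \<in> {p. p permutes {0..<n}}"
  then have "p i < n" if "i < n" for i
    using permutes_in_image that by fastforce
  then show "signof p * (\<Prod>i=0..<n. mat n n (\<lambda>(i, j). r i j) $$ (i, p i))
      = signof p * (\<Prod>i=0..<n. r i (p i))"
    by (auto intro!: arg_cong[where f = "(*) _"] prod.cong)
qed

lemma det_rows_update_linear:
  assumes "k < n"
  shows "det_rows n (r(k := (\<lambda>j. a * x j + b * y j)))
    = a * det_rows n (r(k := x)) + b * det_rows n (r(k := y))"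
proof -
  have split: "(\<Prod>i=0..<n. (r(k := z)) i (p i)) = z (p k) * (\<Prod>i\<in>{0..<n}-{k}. r i (p i))" for z p
    using assms by (subst prod.remove[of _ k]) (auto intro!: prod.cong)
  show ?thesis
    unfolding det_rows_permutations split
    by (simp add: sum_distrib_left sum.distrib algebra_simps)
qed

lemma det_rows_equal_rows:
  assumes "k < n" "l < n" "k \<noteq> l" "\<And>j. j < n \<Longrightarrow> r k j = r l j"
  shows "det_rows n r = 0"
  unfolding det_rows_def
  by (rule det_identical_rows[OF _ assms(3,1,2)]) (use assms in \<open>auto intro!: eq_vecI\<close>)

lemma det_rows_zero_row:
  assumes "k < n" "\<And>j. j < n \<Longrightarrow> r k j = 0"
  shows "det_rows n r = 0"
proof -
  have "det_rows n r = det_rows n (r(k := (\<lambda>j. 0 * r k j + 0 * r k j)))"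
    by (rule det_rows_cong) (auto simp: assms)
  also have "\<dots> = 0"
    by (simp only: det_rows_update_linear[OF assms(1)]) simp
  finally show ?thesis .
qed

lemma det_rows_update_sum:
  assumes "k < n" "finite S"
  shows "det_rows n (r(k := (\<lambda>j. \<Sum>t\<in>S. c t * y t j))) = (\<Sum>t\<in>S. c t * det_rows n (r(k := y t)))"
  using assms(2)
proof (induction S rule: finite_induct)
  case empty
  show ?case by (simp add: det_rows_zero_row[OF assms(1)])
next
  case (insert t S)
  then have "(\<lambda>j. \<Sum>t\<in>insert t S. c t * y t j) = (\<lambda>j. c t * y t j + 1 * (\<Sum>t\<in>S. c t * y t j))"
    by auto
  with insert show ?case
    by (simp only: det_rows_update_linear[OF assms(1)]) (simp add: fun_upd_def)
qed

lemma det_rows_add_earlier_rows: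
  assumes "\<And>k j. k < n \<Longrightarrow> j < n \<Longrightarrow> u k j = w k j + (\<Sum>l<k. cf k l * w l j)"
  shows "det_rows n u = det_rows n w"
proof -
  define mix where "mix m = (\<lambda>k. if m \<le> k then u k else w k)" for m
  have mix_step: "det_rows n (mix m) = det_rows n (mix (Suc m))" if m: "m < n" for m
  proof -
    let ?r = "mix (Suc m)"
    have "det_rows n (mix m)
        = det_rows n (?r(m := (\<lambda>j. 1 * ?r m j + 1 * (\<Sum>l<m. cf m l * ?r l j))))"
      by (rule det_rows_cong) (auto simp: mix_def assms intro!: sum.cong)
    also have "\<dots> = det_rows n ?r + (\<Sum>l<m. cf m l * det_rows n (?r(m := ?r l)))"
      by (simp only: det_rows_update_linear[OF m] det_rows_update_sum[OF m finite_lessThan])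
        (simp add: fun_upd_idem)
    also have "(\<Sum>l<m. cf m l * det_rows n (?r(m := ?r l))) = 0"
    proof (intro sum.neutral ballI)
      fix l assume "l \<in> {..<m}"
      then have "det_rows n (?r(m := ?r l)) = 0"
        using m by (intro det_rows_equal_rows[of m n l]) auto
      then show "cf m l * det_rows n (?r(m := ?r l)) = 0" by simp
    qed
    finally show ?thesis
      by (simp add: fun_upd_idem)
  qed
  have "det_rows n (mix m) = det_rows n w" if "m \<le> n" for m
    using that
  proof (induction m rule: inc_induct)
    case base
    show ?case by (rule det_rows_cong) (auto simp: mix_def)
  next
    case (step m)
    then show ?case using mix_step[of m] by simp
  qed
  moreover have "mix 0 = u" by (simp add: mix_def)
  ultimately show ?thesis by auto
qed

lemma det_rows_add_previous_row:
  assumes "\<And>j. j < n \<Longrightarrow> u 0 j = w 0 j"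
    and "\<And>k j. 0 < k \<Longrightarrow> k < n \<Longrightarrow> j < n \<Longrightarrow> u k j = w k j + c k * w (k - 1) j"
  shows "det_rows n u = det_rows n w"
proof (rule det_rows_add_earlier_rows[where cf = "\<lambda>k l. if l = k - 1 then c k else 0"])
  fix k j assume "k < n" "j < n"
  moreover have "(\<Sum>l<k. (if l = k - 1 then c k else 0) * w l j) = (if 0 < k then c k * w (k - 1) j else 0)"
    by (simp add: if_distrib[where f = "\<lambda>x. x * _"] sum.delta cong: if_cong)
  ultimately show "u k j = w k j + (\<Sum>l<k. (if l = k - 1 then c k else 0) * w l j)"
    using assms by auto
qed

definition det_delete_row :: "nat \<Rightarrow> (nat \<Rightarrow> nat \<Rightarrow> complex) \<Rightarrow> nat \<Rightarrow> complex" where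
  "det_delete_row n w k = det_rows n (\<lambda>i. if i < k then w i else w (Suc i))"

lemma det_rows_laplace_last_column:
  "det_rows (Suc n) (\<lambda>k j. if j < n then V k j else z k)
    = (\<Sum>k\<le>n. (-1)^(k+n) * z k * det_delete_row n V k)"
proof -
  let ?A = "mat (Suc n) (Suc n) (\<lambda>(i,j). if j < n then V i j else z i)"
  have "det ?A = (\<Sum>i<Suc n. ?A $$ (i, n) * cofactor ?A i n)"
    by (rule laplace_expansion_column) auto
  also have "\<dots> = (\<Sum>k\<le>n. (-1)^(k+n) * z k * det_delete_row n V k)"
    unfolding lessThan_Suc_atMost
  proof (rule sum.cong[OF refl])
    fix k assume "k \<in> {..n}"
    then have "mat_delete ?A k n = mat n n (\<lambda>(i,j). (if i < k then V i else V (Suc i)) j)"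
      unfolding mat_delete_def by (intro eq_matI) auto
    with \<open>k \<in> {..n}\<close> show "?A $$ (k, n) * cofactor ?A k n
        = (-1)^(k+n) * z k * det_delete_row n V k"
      unfolding cofactor_def det_delete_row_def det_rows_def by simp
  qed
  finally show ?thesis unfolding det_rows_def by simp
qed

lemma det_rows_rotate:
  assumes "0 < n"
  shows "det_rows n (\<lambda>i. if i < n - 1 then Q i else x)
    = (-1)^(n-1) * det_rows n (\<lambda>i. if i = 0 then x else Q (i - 1))"
proof -
  let ?A = "mat n n (\<lambda>(i,j). (if i < n - 1 then Q i else x) j)"
  have A: "?A \<in> carrier_mat n n" by auto
  have "swap_row_to_front ?A (n-1) = mat n n (\<lambda>(i,j). (if i = 0 then x else Q (i-1)) j)"
    by (subst swap_row_to_front_result[OF A]) (use assms in \<open>auto intro!: eq_matI\<close>)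
  moreover have "det (swap_row_to_front ?A (n-1)) = (-1)^(n-1) * det ?A"
    by (rule swap_row_to_front_det[OF A]) (use assms in auto)
  ultimately show ?thesis
    unfolding det_rows_def by (simp add: minus_one_mult_self mult.assoc[symmetric])
qed

definition det_last_row :: "nat \<Rightarrow> (nat \<Rightarrow> nat \<Rightarrow> complex) \<Rightarrow> (nat \<Rightarrow> complex) \<Rightarrow> complex" where
  "det_last_row n Q v = det_rows n (\<lambda>i. if i < n - 1 then Q i else v)"

text \<open>For the rows w of a Casoratian, det_g, det_h and det_s are g', h' and s': the rows 0, ..., n-2
  followed by row n, resp. row n+1, and the rows 0, ..., n-3, n-1, n.\<close>

definition det_g :: "nat \<Rightarrow> (nat \<Rightarrow> nat \<Rightarrow> complex) \<Rightarrow> complex" where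
  "det_g n w = det_last_row n w (w n)"

definition det_h :: "nat \<Rightarrow> (nat \<Rightarrow> nat \<Rightarrow> complex) \<Rightarrow> complex" where
  "det_h n w = det_last_row n w (w (Suc n))"

definition det_s :: "nat \<Rightarrow> (nat \<Rightarrow> nat \<Rightarrow> complex) \<Rightarrow> complex" where
  "det_s n w = (if 2 \<le> n then det_delete_row n w (n - 2) else 0)"

lemma det_delete_row_last: "det_delete_row n w n = det_rows n w"
  unfolding det_delete_row_def by (rule det_rows_cong) auto

lemma det_delete_row_penultimate:
  assumes "0 < n"
  shows "det_delete_row n w (n - 1) = det_g n w"
  unfolding det_delete_row_def det_g_def det_last_row_def
proof (rule det_rows_cong)
  fix i j assume "i < n"
  then have "i < n - 1 \<or> i = n - 1" by linarith
  with assms show "(if i < n - 1 then w i else w (Suc i)) j = (if i < n - 1 then w i else w n) j"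
    by auto
qed

lemma det_last_row_update:
  assumes "0 < n"
  shows "det_last_row n Q v = det_rows n (Q(n - 1 := v))"
  unfolding det_last_row_def by (rule det_rows_cong) (use assms in auto)

lemma det_last_row_add:
  assumes "0 < n"
  shows "det_last_row n Q (\<lambda>j. u j + v j) = det_last_row n Q u + det_last_row n Q v"
  using det_rows_update_linear[of "n - 1" n Q 1 u 1 v] assms by (simp add: det_last_row_update)

lemma det_last_row_scale:
  assumes "0 < n"
  shows "det_last_row n Q (\<lambda>j. x * u j) = x * det_last_row n Q u"
  using det_rows_update_linear[of "n - 1" n Q x u 0 u] assms by (simp add: det_last_row_update)

lemma det_last_row_cong:
  "(\<And>j. j < n \<Longrightarrow> v j = v' j) \<Longrightarrow> det_last_row n Q v = det_last_row n Q v'"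
  unfolding det_last_row_def by (rule det_rows_cong) auto

lemma det_last_row_earlier_row:
  assumes "k < n - 1"
  shows "det_last_row n Q (Q k) = 0"
  unfolding det_last_row_def by (rule det_rows_equal_rows[of k n "n - 1"]) (use assms in auto)

lemma det_last_row_own_row:
  assumes "0 < n"
  shows "det_last_row n Q (Q (n - 1)) = det_rows n Q"
  unfolding det_last_row_def
proof (rule det_rows_cong)
  fix i j assume "i < n"
  then have "i < n - 1 \<or> i = n - 1" by linarith
  then show "(if i < n - 1 then Q i else Q (n - 1)) j = Q i j"
    by auto
qed

lemma laplace_repeated_column:
  assumes "i0 < n"
  shows "(\<Sum>k\<le>n. (-1)^k * det_delete_row n V k * V k i0) = 0"
proof -
  have "det_rows (Suc n) (\<lambda>k j. if j < n then V k j else V k i0) = 0"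
    unfolding det_rows_def
    by (rule det_identical_columns[of _ "Suc n" i0 n]) (use assms in \<open>auto intro!: eq_vecI\<close>)
  then have "(-1)^n * (\<Sum>k\<le>n. (-1)^(k+n) * V k i0 * det_delete_row n V k) = 0"
    by (simp add: det_rows_laplace_last_column)
  moreover have "(-1)^n * (\<Sum>k\<le>n. (-1)^(k+n) * V k i0 * det_delete_row n V k)
      = (\<Sum>k\<le>n. (-1)^k * det_delete_row n V k * V k i0)"
    unfolding sum_distrib_left
    by (rule sum.cong) (simp_all add: power_add algebra_simps minus_one_mult_self)
  ultimately show ?thesis by simp
qed

lemma sum_atMost_split_last_two:
  fixes f :: "nat \<Rightarrow> 'a::comm_monoid_add"
  assumes "0 < n"
  shows "(\<Sum>k\<le>n. f k) = (\<Sum>k<n - 1. f k) + f (n - 1) + f n"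
  using assms by (cases n) (simp_all add: lessThan_Suc_atMost[symmetric])

text \<open>Expansion along the last column of the (n+1) x (n+1) determinant whose rows are w 0, ..., w n,
  each extended by the value of the linear functional det_last_row n Q at the corresponding row of v.
  It vanishes when v is a fixed linear image of w (plucker_sum_matrix); every bilinear identity
  below is such a vanishing sum, evaluated in two ways.\<close>

definition plucker_sum ::
  "nat \<Rightarrow> (nat \<Rightarrow> nat \<Rightarrow> complex) \<Rightarrow> (nat \<Rightarrow> nat \<Rightarrow> complex) \<Rightarrow> (nat \<Rightarrow> nat \<Rightarrow> complex) \<Rightarrow> complex"
where
  "plucker_sum n w Q v = (\<Sum>k\<le>n. (-1)^k * det_delete_row n w k * det_last_row n Q (v k))"

lemma plucker_sum_cong:
  "(\<And>k j. k \<le> n \<Longrightarrow> j < n \<Longrightarrow> v k j = v' k j) \<Longrightarrow> plucker_sum n w Q v = plucker_sum n w Q v'"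
  unfolding plucker_sum_def by (auto intro!: sum.cong det_last_row_cong)

lemma plucker_sum_add:
  assumes "0 < n"
  shows "plucker_sum n w Q (\<lambda>k j. u k j + v k j) = plucker_sum n w Q u + plucker_sum n w Q v"
  by (simp add: plucker_sum_def det_last_row_add[OF assms] algebra_simps sum.distrib)

lemma plucker_sum_scale:
  assumes "0 < n"
  shows "plucker_sum n w Q (\<lambda>k j. x * u k j) = x * plucker_sum n w Q u"
  by (simp add: plucker_sum_def det_last_row_scale[OF assms] algebra_simps sum_distrib_left)

lemma plucker_sum_combination:
  assumes "0 < n"
    and "\<And>k j. j < n \<Longrightarrow> v k j = x4 * u (k+4) j + x3 * u (k+3) j + x2 * u (k+2) j + x1 * u (k+1) j + x0 * u k j"
  shows "plucker_sum n w Q v = x4 * plucker_sum n w Q (\<lambda>k. u (k+4)) + x3 * plucker_sum n w Q (\<lambda>k. u (k+3))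
    + x2 * plucker_sum n w Q (\<lambda>k. u (k+2)) + x1 * plucker_sum n w Q (\<lambda>k. u (k+1)) + x0 * plucker_sum n w Q u"
proof -
  have "plucker_sum n w Q v = plucker_sum n w Q
      (\<lambda>k j. x4 * u (k+4) j + x3 * u (k+3) j + x2 * u (k+2) j + x1 * u (k+1) j + x0 * u k j)"
    using assms(2) by (intro plucker_sum_cong) simp
  then show ?thesis
    by (simp only: plucker_sum_add[OF assms(1)] plucker_sum_scale[OF assms(1)])
qed

lemma plucker_sum_matrix:
  assumes "0 < n"
  shows "plucker_sum n w Q (\<lambda>k i. \<Sum>j<n. M i j * w k j) = 0"
proof -
  let ?c = "\<lambda>k. (-1)^k * det_delete_row n w k"
  have "plucker_sum n w Q (\<lambda>k i. \<Sum>j<n. M i j * w k j)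
      = det_rows n (Q(n - 1 := (\<lambda>i. \<Sum>k\<le>n. ?c k * (\<Sum>j<n. M i j * w k j))))"
    unfolding plucker_sum_def det_last_row_update[OF assms]
    by (subst det_rows_update_sum) (use assms in \<open>auto simp: mult.assoc\<close>)
  also have "\<dots> = 0"
  proof (rule det_rows_zero_row)
    fix i
    have "(\<Sum>k\<le>n. ?c k * (\<Sum>j<n. M i j * w k j)) = (\<Sum>j<n. M i j * (\<Sum>k\<le>n. ?c k * w k j))"
      by (simp add: sum_distrib_left algebra_simps sum.swap[of _ "{..n}"])
    also have "\<dots> = 0"
      by (simp add: laplace_repeated_column)
    finally show "(Q(n - 1 := (\<lambda>i. \<Sum>k\<le>n. ?c k * (\<Sum>j<n. M i j * w k j)))) (n - 1) i = 0"
      by simp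
  qed (use assms in auto)
  finally show ?thesis .
qed

lemma plucker_sum_self:
  assumes "0 < n"
  shows "plucker_sum n w Q w = 0"
proof -
  have "plucker_sum n w Q w = plucker_sum n w Q (\<lambda>k i. \<Sum>j<n. (if i = j then 1 else 0) * w k j)"
  proof (rule plucker_sum_cong)
    fix k j assume "j < n"
    have "(\<Sum>i<n. (if j = i then 1 else 0) * w k i) = (\<Sum>i<n. if j = i then w k i else 0)"
      by (rule sum.cong) auto
    with \<open>j < n\<close> show "w k j = (\<Sum>i<n. (if j = i then 1 else 0) * w k i)" by simp
  qed
  then show ?thesis by (simp only: plucker_sum_matrix[OF assms])
qed

lemma plucker_sum_last_row:
  assumes "0 < n"
  shows "plucker_sum n w Q (\<lambda>k. if k < n then Q k else x)
    = (-1)^n * (det_rows n w * det_last_row n Q x - det_g n w * det_rows n Q)"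
proof -
  obtain m where n: "n = Suc m" using assms by (cases n) auto
  have "(\<Sum>k<m. (-1)^k * det_delete_row n w k * det_last_row n Q (Q k)) = 0"
    by (rule sum.neutral) (simp add: n det_last_row_earlier_row)
  then show ?thesis
    using det_delete_row_penultimate[OF assms, of w] det_last_row_own_row[OF assms, of Q]
    unfolding plucker_sum_def sum_atMost_split_last_two[OF assms]
    by (simp add: n det_delete_row_last algebra_simps)
qed

lemma plucker_sum_own_rows:
  assumes "0 < n"
  shows "plucker_sum n w Q Q = (-1)^n * (det_rows n w * det_g n Q - det_g n w * det_rows n Q)"
proof -
  have "plucker_sum n w Q Q = plucker_sum n w Q (\<lambda>k. if k < n then Q k else Q n)"
    by (rule plucker_sum_cong) (simp add: not_less)
  then show ?thesis by (simp add: plucker_sum_last_row[OF assms] det_g_def)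
qed

lemma plucker_sum_next_rows:
  assumes "0 < n"
  shows "plucker_sum n w Q (\<lambda>k. Q (Suc k))
    = (-1)^n * (det_s n w * det_rows n Q - det_g n w * det_g n Q + det_rows n w * det_h n Q)"
proof -
  let ?t = "\<lambda>k. (-1)^k * det_delete_row n w k * det_last_row n Q (Q (Suc k))"
  have low: "(\<Sum>k<n - 1. ?t k) = (-1)^n * det_s n w * det_rows n Q"
  proof (cases "2 \<le> n")
    case True
    then obtain m where n: "n = Suc (Suc m)" by (metis add_2_eq_Suc le_Suc_ex)
    have "(\<Sum>k<m. ?t k) = 0"
      by (rule sum.neutral) (simp add: n det_last_row_earlier_row)
    then show ?thesis
      using det_last_row_own_row[OF assms, of Q] by (simp add: n det_s_def)
  next
    case False
    with assms have "n = 1" by simp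
    then show ?thesis by (simp add: det_s_def)
  qed
  obtain m where n: "n = Suc m" using assms by (cases n) auto
  show ?thesis
    using det_delete_row_penultimate[OF assms, of w]
    unfolding plucker_sum_def sum_atMost_split_last_two[OF assms] low
    by (simp add: n det_delete_row_last det_g_def det_h_def algebra_simps)
qed

definition shift_rows :: "complex \<Rightarrow> (nat \<Rightarrow> nat \<Rightarrow> complex) \<Rightarrow> nat \<Rightarrow> nat \<Rightarrow> complex" where
  "shift_rows c w = (\<lambda>k j. c * w k j + w (Suc k) j)"

lemma shift_rows_commute: "shift_rows c (shift_rows d w) = shift_rows d (shift_rows c w)"
  by (simp add: shift_rows_def fun_eq_iff algebra_simps)

lemma minus_one_power_mult_power_minus: "(-1::'a::comm_ring_1)^k * (-c)^k = c^k"
  by (simp flip: power_mult_distrib)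

lemma det_rows_shift_rows: "det_rows n (shift_rows c w) = (\<Sum>k\<le>n. c^k * det_delete_row n w k)"
proof -
  \<comment> \<open>Border w by the column (-c)^k; adding c times each row to the next one kills this column
    except in row 0 and produces the rows of shift_rows c w.\<close>
  let ?R = "\<lambda>k j. if j < n then w k j else (-c)^k"
  let ?V = "\<lambda>k. if k = 0 then w 0 else shift_rows c w (k - 1)"
  have "det_rows (Suc n) (\<lambda>k j. if j < n then ?V k j else if k = 0 then 1 else 0) = det_rows (Suc n) ?R"
  proof (rule det_rows_add_previous_row[where c = "\<lambda>_. c"])
    fix k j :: nat assume "0 < k"
    then have "(-c)^k = - c * (-c)^(k - 1)" by (cases k) auto
    with \<open>0 < k\<close> show "(if j < n then ?V k j else if k = 0 then 1 else 0) = ?R k j + c * ?R (k - 1) j"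
      by (auto simp: shift_rows_def)
  qed simp
  also have "\<dots> = (\<Sum>k\<le>n. (-1)^(k+n) * (-c)^k * det_delete_row n w k)"
    by (rule det_rows_laplace_last_column)
  also have "\<dots> = (-1)^n * (\<Sum>k\<le>n. c^k * det_delete_row n w k)"
    unfolding sum_distrib_left
  proof (rule sum.cong[OF refl])
    fix k
    have "(-1)^(k+n) * (-c)^k = (-1)^n * ((-1::complex)^k * (-c)^k)"
      by (simp add: power_add)
    then show "(-1)^(k+n) * (-c)^k * det_delete_row n w k = (-1)^n * (c^k * det_delete_row n w k)"
      by (simp add: minus_one_power_mult_power_minus)
  qed
  moreover have "det_rows (Suc n) (\<lambda>k j. if j < n then ?V k j else if k = 0 then 1 else 0)
      = (\<Sum>k\<le>n. if k = 0 then (-1)^n * det_rows n (shift_rows c w) else 0)"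
    unfolding det_rows_laplace_last_column by (rule sum.cong) (auto simp: det_delete_row_def)
  ultimately show ?thesis by simp
qed

lemma det_last_row_shift_rows_first:
  assumes "0 < n"
  shows "det_last_row n (shift_rows c w) (w 0) = - ((-1)^n * det_rows n w)"
proof -
  obtain m where n: "n = Suc m" using assms by (cases n) auto
  have "det_rows n (\<lambda>i. if i = 0 then w 0 else shift_rows c w (i - 1)) = det_rows n w"
    by (rule det_rows_add_previous_row[where c = "\<lambda>_. c"]) (auto simp: shift_rows_def)
  then show ?thesis
    unfolding det_last_row_def det_rows_rotate[OF assms] by (simp add: n)
qed

lemma det_last_row_shift_rows:
  assumes "0 < n" "k \<le> n"
  shows "det_last_row n (shift_rows c w) (w k)
    = - ((-1)^n * (-c)^k * det_rows n w) + (if k = n then det_rows n (shift_rows c w) else 0)"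
proof -
  let ?L = "det_last_row n (shift_rows c w)"
  have step: "?L (w (Suc k)) = ?L (shift_rows c w k) - c * ?L (w k)" for k
    unfolding shift_rows_def by (simp add: det_last_row_add[OF assms(1)] det_last_row_scale[OF assms(1)])
  have geometric: "?L (w k) = (-c)^k * ?L (w 0)" if "k \<le> n - 1" for k
    using that
  proof (induction k)
    case (Suc k)
    then show ?case by (simp add: step det_last_row_earlier_row)
  qed simp
  show ?thesis
  proof (cases "k = n")
    case True
    obtain m where n: "n = Suc m" using assms by (cases n) auto
    show ?thesis
      using step[of m] geometric[of m] det_last_row_own_row[OF assms(1), of "shift_rows c w"]
      by (simp add: True n det_last_row_shift_rows_first)
  next
    case False
    with assms geometric[of k] show ?thesis by (simp add: det_last_row_shift_rows_first)
  qed
qed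

lemma det_last_row_shift_rows_last:
  assumes "0 < n"
  shows "det_last_row n (shift_rows c w) (w n) = det_rows n (shift_rows c w) - c^n * det_rows n w"
  using det_last_row_shift_rows[OF assms, of n c w] minus_one_power_mult_power_minus[of n c] by simp

lemma det_last_row_shift_rows_beyond:
  assumes "0 < n"
  shows "det_last_row n (shift_rows c w) (w (Suc n))
    = det_g n (shift_rows c w) - c * det_rows n (shift_rows c w) + c^(Suc n) * det_rows n w"
proof -
  have "shift_rows c w n = (\<lambda>j. c * w n j + w (Suc n) j)" by (simp add: shift_rows_def)
  then have "det_g n (shift_rows c w)
      = c * det_last_row n (shift_rows c w) (w n) + det_last_row n (shift_rows c w) (w (Suc n))"
    unfolding det_g_def by (simp add: det_last_row_add[OF assms] det_last_row_scale[OF assms])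
  then show ?thesis by (simp add: det_last_row_shift_rows_last[OF assms] algebra_simps)
qed

lemma plucker_sum_shift_rows_last_row:
  assumes "0 < n"
  shows "plucker_sum n w (shift_rows c P) (\<lambda>k. if k < n then P k else x)
    = (-1)^n * (det_rows n w * det_last_row n (shift_rows c P) x
                - det_rows n P * (det_rows n (shift_rows c w) - c^n * det_rows n w))"
proof -
  have "(\<Sum>k<n. (-1)^k * det_delete_row n w k * det_last_row n (shift_rows c P) (P k))
      = - ((-1)^n * det_rows n P) * (\<Sum>k<n. c^k * det_delete_row n w k)"
    unfolding sum_distrib_left
  proof (rule sum.cong[OF refl])
    fix k assume "k \<in> {..<n}"
    then show "(-1)^k * det_delete_row n w k * det_last_row n (shift_rows c P) (P k)
        = - ((-1)^n * det_rows n P) * (c^k * det_delete_row n w k)"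
      using minus_one_power_mult_power_minus[of k c]
      by (simp add: det_last_row_shift_rows[OF assms] algebra_simps)
  qed
  moreover have "(\<Sum>k<n. c^k * det_delete_row n w k) = det_rows n (shift_rows c w) - c^n * det_rows n w"
    by (simp add: det_rows_shift_rows lessThan_Suc_atMost[symmetric] det_delete_row_last)
  ultimately show ?thesis
    unfolding plucker_sum_def lessThan_Suc_atMost[symmetric]
    by (simp add: det_delete_row_last algebra_simps)
qed

lemma plucker_sum_shift_rows:
  assumes "0 < n"
  shows "plucker_sum n w (shift_rows c P) P
    = (-1)^n * (det_rows n w * det_rows n (shift_rows c P) - det_rows n P * det_rows n (shift_rows c w))"
proof -
  have "plucker_sum n w (shift_rows c P) P = plucker_sum n w (shift_rows c P) (\<lambda>k. if k < n then P k else P n)"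
    by (rule plucker_sum_cong) (simp add: not_less)
  then show ?thesis
    using assms minus_one_power_mult_power_minus[of n c]
    by (simp add: plucker_sum_shift_rows_last_row det_last_row_shift_rows algebra_simps)
qed

definition skip_row :: "nat \<Rightarrow> (nat \<Rightarrow> nat \<Rightarrow> complex) \<Rightarrow> nat \<Rightarrow> nat \<Rightarrow> complex" where
  "skip_row n w = (\<lambda>k. if k < n then w k else w (Suc k))"

lemma det_rows_skip_row: "det_rows n (skip_row n w) = det_rows n w"
  unfolding skip_row_def by (rule det_rows_cong) auto

lemma det_g_skip_row: "det_g n (skip_row n w) = det_h n w"
  unfolding det_g_def det_h_def det_last_row_def skip_row_def by (rule det_rows_cong) auto

lemma det_rows_shift_skip_row:
  assumes "0 < n"
  shows "det_rows n (shift_rows c (skip_row n w))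
    = det_g n (shift_rows c w) - c * det_rows n (shift_rows c w) + (1 + c) * c^n * det_rows n w"
proof -
  obtain m where n: "n = Suc m" using assms by (cases n) auto
  have "det_rows n (shift_rows c (skip_row n w))
      = det_last_row n (shift_rows c w) (\<lambda>j. shift_rows c w n j + (- c) * w n j + c * w m j)"
    unfolding det_last_row_def
    by (rule det_rows_cong) (auto simp: shift_rows_def skip_row_def n not_less_less_Suc_eq)
  also have "\<dots> = det_g n (shift_rows c w) - c * det_last_row n (shift_rows c w) (w n)
      + c * det_last_row n (shift_rows c w) (w m)"
    by (simp only: det_last_row_add[OF assms] det_last_row_scale[OF assms]) (simp add: det_g_def)
  also have "\<dots> = det_g n (shift_rows c w) - c * det_rows n (shift_rows c w) + (1 + c) * c^n * det_rows n w"
  proof -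
    have wm: "det_last_row n (shift_rows c w) (w m) = c^m * det_rows n w"
      using det_last_row_shift_rows[OF assms, of m c w] minus_one_power_mult_power_minus[of m c]
      by (simp add: n)
    show ?thesis unfolding det_last_row_shift_rows_last[OF assms] wm by (simp add: n algebra_simps)
  qed
  finally show ?thesis .
qed

lemma bilinear_fg_two_shifts:
  assumes "0 < n"
  shows "det_rows n (shift_rows c a) * (c * det_rows n (shift_rows d a) + det_g n (shift_rows d a))
     - (c - d) * det_rows n a * det_rows n (shift_rows c (shift_rows d a))
     - (d * det_rows n (shift_rows c a) + det_g n (shift_rows c a)) * det_rows n (shift_rows d a) = 0"
proof -
  let ?A = "shift_rows c a" and ?B = "shift_rows d a"
  have "plucker_sum n ?B ?A (\<lambda>k j. ?A k j + (d - c) * a k j) = plucker_sum n ?B ?A ?B"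
    by (rule plucker_sum_cong) (simp add: shift_rows_def algebra_simps)
  then have "plucker_sum n ?B ?A ?A + (d - c) * plucker_sum n ?B ?A a = 0"
    by (simp add: plucker_sum_add[OF assms] plucker_sum_scale[OF assms] plucker_sum_self[OF assms])
  then have "(-1)^n * (det_rows n ?B * det_g n ?A - det_g n ?B * det_rows n ?A
      + (d - c) * (det_rows n ?B * det_rows n ?A - det_rows n a * det_rows n (shift_rows c ?B))) = 0"
    by (simp add: plucker_sum_own_rows[OF assms] plucker_sum_shift_rows[OF assms] algebra_simps)
  then have "det_rows n ?B * det_g n ?A - det_g n ?B * det_rows n ?A
      + (d - c) * (det_rows n ?B * det_rows n ?A - det_rows n a * det_rows n (shift_rows c ?B)) = 0"
    by simp
  then show ?thesis by (simp add: algebra_simps)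
qed

lemma bilinear_fg_symmetric:
  assumes "0 < n"
  shows "(c - d) * (det_rows n (shift_rows c a) * det_rows n (shift_rows d a)
        - det_rows n a * det_rows n (shift_rows c (shift_rows d a)))
     + det_rows n (shift_rows c a) * det_g n (shift_rows d a)
     - det_rows n (shift_rows d a) * det_g n (shift_rows c a) = 0"
  using bilinear_fg_two_shifts[OF assms, of c a d] by (simp add: algebra_simps)

lemma bilinear_fghs_one_shift:
  assumes "0 < n"
  shows "det_rows n (shift_rows c a) * (c * det_g n a + det_h n a)
     - det_g n (shift_rows c a) * (c * det_rows n a + det_g n a)
     + det_rows n a * det_s n (shift_rows c a) = 0"
proof -
  let ?A = "shift_rows c a"
  have "plucker_sum n ?A a (\<lambda>k j. c * a k j + a (Suc k) j) = 0"
    using plucker_sum_self[OF assms, of ?A a] by (simp add: shift_rows_def)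
  then have "c * plucker_sum n ?A a a + plucker_sum n ?A a (\<lambda>k. a (Suc k)) = 0"
    by (simp add: plucker_sum_add[OF assms] plucker_sum_scale[OF assms])
  then have "(-1)^n * (c * (det_rows n ?A * det_g n a - det_g n ?A * det_rows n a)
      + (det_s n ?A * det_rows n a - det_g n ?A * det_g n a + det_rows n ?A * det_h n a)) = 0"
    by (simp add: plucker_sum_own_rows[OF assms] plucker_sum_next_rows[OF assms] algebra_simps)
  then have "c * (det_rows n ?A * det_g n a - det_g n ?A * det_rows n a)
      + (det_s n ?A * det_rows n a - det_g n ?A * det_g n a + det_rows n ?A * det_h n a) = 0"
    by simp
  then show ?thesis by (simp add: algebra_simps)
qed

lemma bilinear_fgh_two_shifts:
  assumes "0 < n"
  shows "det_rows n (shift_rows c a) * (d^2 * det_rows n (shift_rows d a) - d * det_g n (shift_rows d a)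
        + det_h n (shift_rows d a))
     + c * det_rows n (shift_rows c a) * (det_g n (shift_rows d a) - d * det_rows n (shift_rows d a))
     - (c - d) * det_rows n a * (det_g n (shift_rows c (shift_rows d a))
        - d * det_rows n (shift_rows c (shift_rows d a)))
     - det_rows n (shift_rows d a) * det_h n (shift_rows c a) = 0"
    (is "?lhs = 0")
proof -
  let ?A = "shift_rows c a" and ?B = "shift_rows d a"
  let ?J = "skip_row n ?B"
  define f fA fB fAB where "f = det_rows n a" and "fA = det_rows n ?A" and "fB = det_rows n ?B"
    and "fAB = det_rows n (shift_rows c ?B)"
  define gA gB gAB where "gA = det_g n ?A" and "gB = det_g n ?B" and "gAB = det_g n (shift_rows c ?B)"
  define hA hB where "hA = det_h n ?A" and "hB = det_h n ?B"
  have "plucker_sum n ?J ?A (\<lambda>k j. skip_row n ?A k j + (d - c) * skip_row n a k j) = plucker_sum n ?J ?A ?J"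
    by (rule plucker_sum_cong) (simp add: skip_row_def shift_rows_def algebra_simps)
  then have rel: "plucker_sum n ?J ?A (skip_row n ?A) + (d - c) * plucker_sum n ?J ?A (skip_row n a) = 0"
    by (simp add: plucker_sum_add[OF assms] plucker_sum_scale[OF assms] plucker_sum_self[OF assms])
  have skip_last: "plucker_sum n ?J Q (skip_row n v) = plucker_sum n ?J Q (\<lambda>k. if k < n then v k else v (Suc n))"
    for Q v by (rule plucker_sum_cong) (auto simp: skip_row_def)
  have P1: "plucker_sum n ?J ?A (skip_row n ?A) = (-1)^n * (fB * hA - hB * fA)"
    unfolding skip_last plucker_sum_last_row[OF assms]
    by (simp add: det_rows_skip_row det_g_skip_row fA_def fB_def hA_def hB_def det_h_def)
  have P2: "plucker_sum n ?J ?A (skip_row n a)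
      = (-1)^n * (fB * det_last_row n ?A (a (Suc n)) - f * (gAB - c * fAB + c^(Suc n) * fB))"
    unfolding skip_last plucker_sum_shift_rows_last_row[OF assms] det_rows_shift_skip_row[OF assms]
    by (simp add: det_rows_skip_row f_def fB_def fAB_def gAB_def algebra_simps)
  have next_row: "det_last_row n ?A (a (Suc n)) = gA - c * fA + c^(Suc n) * f"
    by (simp add: det_last_row_shift_rows_beyond[OF assms] gA_def fA_def f_def)
  from rel have "(-1)^n * (fB * hA - hB * fA + (d - c) * (fB * (gA - c * fA) - f * (gAB - c * fAB))) = 0"
    unfolding P1 P2 next_row by (simp add: algebra_simps)
  then have rel': "fB * hA - hB * fA + (d - c) * (fB * (gA - c * fA) - f * (gAB - c * fAB)) = 0"
    by simp
  have fg: "fA * (c * fB + gB) - (c - d) * f * fAB - (d * fA + gA) * fB = 0"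
    using bilinear_fg_two_shifts[OF assms, of c a d] by (simp add: f_def fA_def fB_def fAB_def gA_def gB_def)
  have "?lhs = (c - d) * (fA * (c * fB + gB) - (c - d) * f * fAB - (d * fA + gA) * fB)
      - (fB * hA - hB * fA + (d - c) * (fB * (gA - c * fA) - f * (gAB - c * fAB)))"
    by (simp add: f_def fA_def fB_def fAB_def gA_def gB_def gAB_def hA_def hB_def algebra_simps
        power2_eq_square)
  then show ?thesis by (simp only: fg rel') simp
qed

lemma bilinear_K_elimination:
  fixes p1 p2 p3 p4 :: complex
  assumes A: "p2 + (c2 + d) * p1 = f * T - Y1 * X1"
    and B: "p2 + (c1 + d) * p1 = f * T - Y2 * X2"
    and C: "p3 + (c1 + c2 + d) * p2 + (c1*c2 + c1*d + c2*d) * p1 = f * GT - g * T"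
    and D: "p4 + (c1 + c2 + d) * p3 + (c1*c2 + c1*d + c2*d) * p2 + c1*c2*d * p1 = s * T - g * GT + f * HT"
    and E: "p4 - e1 * p3 + e2 * p2 - e3 * p1 = 0"
  shows "(Qpol e1 e2 c1 c2 * f * T + s * T + (c1 + c2 + e1) * g * T
       - ((c1 + c2 + e1) * f + g) * (GT - d * T) + f * (HT - d * GT + d^2 * T)) * (c1 - c2)
     - Rpol e1 e2 e3 c1 d * X1 * Y1 + Rpol e1 e2 e3 c2 d * X2 * Y2 = 0"
    (is "?lhs = 0")
proof -
  define h1 where "h1 = c1 + c2 + d"
  define Psi where "Psi = h1^2 - (c1*c2 + c1*d + c2*d) + e1 * h1 + e2"
  define kap where "kap = Psi * (c2 + d) + c1*c2*d + e3 - (c1*c2 + c1*d + c2*d) * (h1 + e1)"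
  have "?lhs = kap * ((p2 + (c1 + d) * p1 - (f * T - Y2 * X2)) - (p2 + (c2 + d) * p1 - (f * T - Y1 * X1)))
      - (c1 - c2) * ((p4 + (c1 + c2 + d) * p3 + (c1*c2 + c1*d + c2*d) * p2 + c1*c2*d * p1
            - (s * T - g * GT + f * HT))
        - (p4 - e1 * p3 + e2 * p2 - e3 * p1)
        - (h1 + e1) * (p3 + (c1 + c2 + d) * p2 + (c1*c2 + c1*d + c2*d) * p1 - (f * GT - g * T))
        + Psi * (p2 + (c2 + d) * p1 - (f * T - Y1 * X1)))"
    unfolding Qpol_def Rpol_def kap_def Psi_def h1_def by (simp add: algebra_simps power2_eq_square)
  also have "\<dots> = 0"
    unfolding A B C D E by simp
  finally show ?thesis .
qed

lemma bilinear_K_three_shifts: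
  assumes n: "0 < n"
    and K: "\<And>k i. i < n \<Longrightarrow> (\<Sum>j<n. M i j * a k j)
      = a (k+4) i - e1 * a (k+3) i + e2 * a (k+2) i - e3 * a (k+1) i"
  shows "(Qpol e1 e2 c1 c2 * det_rows n a * det_rows n (shift_rows c1 (shift_rows c2 (shift_rows d a)))
       + det_s n a * det_rows n (shift_rows c1 (shift_rows c2 (shift_rows d a)))
       + (c1 + c2 + e1) * det_g n a * det_rows n (shift_rows c1 (shift_rows c2 (shift_rows d a)))
       - ((c1 + c2 + e1) * det_rows n a + det_g n a)
         * (det_g n (shift_rows c1 (shift_rows c2 (shift_rows d a)))
            - d * det_rows n (shift_rows c1 (shift_rows c2 (shift_rows d a))))
       + det_rows n a * (det_h n (shift_rows c1 (shift_rows c2 (shift_rows d a)))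
            - d * det_g n (shift_rows c1 (shift_rows c2 (shift_rows d a)))
            + d^2 * det_rows n (shift_rows c1 (shift_rows c2 (shift_rows d a))))) * (c1 - c2)
     - Rpol e1 e2 e3 c1 d * det_rows n (shift_rows c1 a) * det_rows n (shift_rows c2 (shift_rows d a))
     + Rpol e1 e2 e3 c2 d * det_rows n (shift_rows c2 a) * det_rows n (shift_rows c1 (shift_rows d a)) = 0"
proof -
  let ?B = "shift_rows d a"
  let ?W = "shift_rows c1 (shift_rows c2 ?B)"
  define p where "p t = (-1)^n * plucker_sum n a ?W (\<lambda>k. a (k + t))" for t
  have sign: "(-1::complex)^n * ((-1)^n * x) = x" for x
    by (simp add: mult.assoc[symmetric])
  have combination: "(-1)^n * plucker_sum n a ?W v = x4 * p 4 + x3 * p 3 + x2 * p 2 + x1 * p 1 + x0 * p 0"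
    if "\<And>k j. j < n \<Longrightarrow> v k j = x4 * a (k+4) j + x3 * a (k+3) j + x2 * a (k+2) j + x1 * a (k+1) j + x0 * a k j"
    for v x0 x1 x2 x3 x4
    by (subst plucker_sum_combination[OF n, where v = v and u = a])
      (simp_all add: that p_def algebra_simps)
  have shift_rows_2: "shift_rows x (shift_rows y w) k j = w (k+2) j + (x + y) * w (k+1) j + x * y * w k j"
    for x y w k j by (simp add: shift_rows_def numeral_2_eq_2 algebra_simps)
  have shift_rows_3: "?W k j = a (k+3) j + (c1 + c2 + d) * a (k+2) j + (c1*c2 + c1*d + c2*d) * a (k+1) j
      + c1*c2*d * a k j" for k j
    by (simp add: shift_rows_def numeral_2_eq_2 numeral_3_eq_3 algebra_simps)
  have "p 0 = 0"
    by (simp add: p_def plucker_sum_self[OF n])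
  moreover have "(-1)^n * plucker_sum n a ?W (shift_rows c2 ?B)
      = 0 * p 4 + 0 * p 3 + 1 * p 2 + (c2 + d) * p 1 + c2 * d * p 0"
    by (rule combination) (simp add: shift_rows_2)
  moreover have "(-1)^n * plucker_sum n a ?W (shift_rows c1 ?B)
      = 0 * p 4 + 0 * p 3 + 1 * p 2 + (c1 + d) * p 1 + c1 * d * p 0"
    by (rule combination) (simp add: shift_rows_2)
  moreover have "(-1)^n * plucker_sum n a ?W ?W
      = 0 * p 4 + 1 * p 3 + (c1 + c2 + d) * p 2 + (c1*c2 + c1*d + c2*d) * p 1 + c1*c2*d * p 0"
    by (rule combination) (simp add: shift_rows_3)
  moreover have "(-1)^n * plucker_sum n a ?W (\<lambda>k. ?W (Suc k))
      = 1 * p 4 + (c1 + c2 + d) * p 3 + (c1*c2 + c1*d + c2*d) * p 2 + c1*c2*d * p 1 + 0 * p 0"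
    by (rule combination) (simp add: shift_rows_3 eval_nat_numeral algebra_simps)
  moreover have "(-1)^n * plucker_sum n a ?W (\<lambda>k i. \<Sum>j<n. M i j * a k j)
      = 1 * p 4 + (- e1) * p 3 + e2 * p 2 + (- e3) * p 1 + 0 * p 0"
    by (rule combination) (simp add: K)
  ultimately show ?thesis
    using plucker_sum_shift_rows[OF n, of a c1 "shift_rows c2 ?B"]
      plucker_sum_shift_rows[OF n, of a c2 "shift_rows c1 ?B", unfolded shift_rows_commute[of c2 c1]]
    by (intro bilinear_K_elimination[where ?p1.0 = "p 1" and ?p2.0 = "p 2" and ?p3.0 = "p 3" and ?p4.0 = "p 4"])
      (simp_all add: sign plucker_sum_own_rows[OF n] plucker_sum_next_rows[OF n] plucker_sum_matrix[OF n])
qed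

definition vec_rows :: "nat \<Rightarrow> (int \<Rightarrow> complex vec) \<Rightarrow> nat \<Rightarrow> nat \<Rightarrow> complex" where
  "vec_rows N \<psi> = (\<lambda>k j. if j < N then \<psi> (int k) $ j else 0)"

lemma casoratian_eq_det_rows:
  assumes "length ls = N" "\<And>i. i < N \<Longrightarrow> ls ! i = int (\<sigma> i)"
  shows "casoratian \<phi> N ls n m al be = det_rows N (\<lambda>i. vec_rows N (\<phi> n m al be) (\<sigma> i))"
proof -
  let ?M = "mat_of_cols N (map (\<phi> n m al be) ls)"
  have M: "?M \<in> carrier_mat N N" using assms(1) mat_of_cols_carrier(1)[of N "map (\<phi> n m al be) ls"] by simp
  have "transpose_mat ?M = mat N N (\<lambda>(i, j). vec_rows N (\<phi> n m al be) (\<sigma> i) j)"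
    by (rule eq_matI) (use assms in \<open>auto simp: mat_of_cols_index vec_rows_def\<close>)
  then show ?thesis
    unfolding casoratian_def det_rows_def using assms(1) det_transpose[OF M] by simp
qed

lemma casoratian_f: "casoratian \<phi> N [0..int N - 1] n m al be = det_rows N (vec_rows N (\<phi> n m al be))"
  using casoratian_eq_det_rows[of "[0..int N - 1]" N "\<lambda>i. i"] by simp

lemma casoratian_g:
  assumes "0 < N"
  shows "casoratian \<phi> N ([0..int N - 2] @ [int N]) n m al be = det_g N (vec_rows N (\<phi> n m al be))"
proof -
  have "casoratian \<phi> N ([0..int N - 2] @ [int N]) n m al be
      = det_rows N (\<lambda>i. vec_rows N (\<phi> n m al be) (if i < N - 1 then i else N))"
    by (rule casoratian_eq_det_rows) (use assms in \<open>auto simp: nth_append\<close>)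
  then show ?thesis
    unfolding det_g_def det_last_row_def by (simp add: if_distrib[where f = "vec_rows _ _"])
qed

lemma casoratian_h:
  assumes "0 < N"
  shows "casoratian \<phi> N ([0..int N - 2] @ [int N + 1]) n m al be = det_h N (vec_rows N (\<phi> n m al be))"
proof -
  have "casoratian \<phi> N ([0..int N - 2] @ [int N + 1]) n m al be
      = det_rows N (\<lambda>i. vec_rows N (\<phi> n m al be) (if i < N - 1 then i else Suc N))"
    by (rule casoratian_eq_det_rows) (use assms in \<open>auto simp: nth_append\<close>)
  then show ?thesis
    unfolding det_h_def det_last_row_def by (simp add: if_distrib[where f = "vec_rows _ _"])
qed

lemma casoratian_s:
  assumes "0 < N"
  shows "casoratian \<phi> N ([0..int N - 3] @ [int N - 1, int N]) n m al be
    = det_s N (vec_rows N (\<phi> n m al be))"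
proof (cases "N = 1")
  case True
  then show ?thesis by (simp add: casoratian_def det_s_def)
next
  case False
  with assms have N: "2 \<le> N" by simp
  have "casoratian \<phi> N ([0..int N - 3] @ [int N - 1, int N]) n m al be
      = det_rows N (\<lambda>i. vec_rows N (\<phi> n m al be) (if i < N - 2 then i else Suc i))"
  proof (rule casoratian_eq_det_rows)
    fix i assume "i < N"
    then consider "i < N - 2" | "i = N - 2" | "i = N - 1" by linarith
    then show "([0..int N - 3] @ [int N - 1, int N]) ! i = int (if i < N - 2 then i else Suc i)"
      using N by cases (auto simp: nth_append)
  qed (use N in simp)
  then show ?thesis
    using N unfolding det_s_def det_delete_row_def by (simp add: if_distrib[where f = "vec_rows _ _"])
qed

lemma vec_rows_shift:
  assumes "\<And>l. dim_vec (\<psi> l) = N"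
    and "\<And>l. c \<cdot>\<^sub>v \<psi> l = \<psi>' l - \<psi> (l + 1)"
  shows "vec_rows N \<psi>' = shift_rows c (vec_rows N \<psi>)"
proof (intro ext)
  fix k j
  have "c * \<psi> (int k) $ j = \<psi>' (int k) $ j - \<psi> (int k + 1) $ j" if "j < N"
    using arg_cong[OF assms(2)[of "int k"], of "\<lambda>v. v $ j"] that assms(1) by simp
  then show "vec_rows N \<psi>' k j = shift_rows c (vec_rows N \<psi>) k j"
    by (simp add: vec_rows_def shift_rows_def add.commute)
qed

lemma vec_rows_matrix:
  assumes "\<And>l. dim_vec (\<psi> l) = N"
    and "K \<in> carrier_mat N N"
    and "\<And>l. K *\<^sub>v \<psi> l = \<psi> (l+4) - e1 \<cdot>\<^sub>v \<psi> (l+3) + e2 \<cdot>\<^sub>v \<psi> (l+2) - e3 \<cdot>\<^sub>v \<psi> (l+1)"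
    and "i < N"
  shows "(\<Sum>j<N. K $$ (i, j) * vec_rows N \<psi> k j)
    = vec_rows N \<psi> (k+4) i - e1 * vec_rows N \<psi> (k+3) i + e2 * vec_rows N \<psi> (k+2) i
      - e3 * vec_rows N \<psi> (k+1) i"
proof -
  have "(\<Sum>j<N. K $$ (i, j) * vec_rows N \<psi> k j) = (K *\<^sub>v \<psi> (int k)) $ i"
    using assms(1,2,4) by (auto simp: scalar_prod_def vec_rows_def atLeast0LessThan intro!: sum.cong)
  also have "\<dots> = \<psi> (int k + 4) $ i - e1 * \<psi> (int k + 3) $ i + e2 * \<psi> (int k + 2) $ i
      - e3 * \<psi> (int k + 1) $ i"
    unfolding assms(3) using assms(1,4) by simp
  finally show ?thesis
    using assms(4) by (simp add: vec_rows_def add.commute)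
qed
theorem theorem4p4:
  fixes \<alpha>1 \<alpha>2 \<alpha>3 \<delta> p q a b :: complex
    and N :: nat
    and \<phi> :: "int \<Rightarrow> int \<Rightarrow> int \<Rightarrow> int \<Rightarrow> int \<Rightarrow> complex vec"
    and K :: "complex mat"
  defines "\<sigma>1 \<equiv> p - \<delta>" and "\<sigma>2 \<equiv> q - \<delta>" and "\<sigma>3 \<equiv> a - \<delta>" and "\<sigma>4 \<equiv> b - \<delta>"
    and "\<epsilon>1 \<equiv> eps1 \<alpha>1 \<alpha>2 \<alpha>3 \<delta>" and "\<epsilon>2 \<equiv> eps2 \<alpha>1 \<alpha>2 \<alpha>3 \<delta>"
    and "\<epsilon>3 \<equiv> eps3 \<alpha>1 \<alpha>2 \<alpha>3 \<delta>"
    and "f \<equiv> casoratian \<phi> N [0..int N - 1]"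
    and "g \<equiv> casoratian \<phi> N ([0..int N - 2] @ [int N])"
    and "h \<equiv> casoratian \<phi> N ([0..int N - 2] @ [int N + 1])"
    and "s \<equiv> casoratian \<phi> N ([0..int N - 3] @ [int N - 1, int N])"
  assumes distinct: "distinct [p, q, a, b]"
    and dim: "\<And>n m al be l. dim_vec (\<phi> n m al be l) = N"
    and K: "K \<in> carrier_mat N N"
    and cn: "\<And>n m al be l. \<sigma>1 \<cdot>\<^sub>v \<phi> (n-1) m al be l = \<phi> n m al be l - \<phi> (n-1) m al be (l+1)"
    and cm: "\<And>n m al be l. \<sigma>2 \<cdot>\<^sub>v \<phi> n (m-1) al be l = \<phi> n m al be l - \<phi> n (m-1) al be (l+1)"
    and ca: "\<And>n m al be l. \<sigma>3 \<cdot>\<^sub>v \<phi> n m (al-1) be l = \<phi> n m al be l - \<phi> n m (al-1) be (l+1)"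
    and cb: "\<And>n m al be l. \<sigma>4 \<cdot>\<^sub>v \<phi> n m al (be-1) l = \<phi> n m al be l - \<phi> n m al (be-1) (l+1)"
    and cK: "\<And>n m al be l. K *\<^sub>v \<phi> n m al be l =
        \<phi> n m al be (l+4) - \<epsilon>1 \<cdot>\<^sub>v \<phi> n m al be (l+3) + \<epsilon>2 \<cdot>\<^sub>v \<phi> n m al be (l+2)
        - \<epsilon>3 \<cdot>\<^sub>v \<phi> n m al be (l+1)"
  shows "\<And>n m al be.
   f (n+1) m al be * (\<sigma>1 * f n m al (be+1) + g n m al (be+1))
     - (\<sigma>1 - \<sigma>4) * f n m al be * f (n+1) m al (be+1)
     - (\<sigma>4 * f (n+1) m al be + g (n+1) m al be) * f n m al (be+1) = 0
 \<and> f n (m+1) al be * (\<sigma>2 * f n m al (be+1) + g n m al (be+1))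
     - (\<sigma>2 - \<sigma>4) * f n m al be * f n (m+1) al (be+1)
     - (\<sigma>4 * f n (m+1) al be + g n (m+1) al be) * f n m al (be+1) = 0
 \<and> f (n+1) m al be * (\<sigma>4^2 * f n m al (be+1) - \<sigma>4 * g n m al (be+1) + h n m al (be+1))
     + \<sigma>1 * f (n+1) m al be * (g n m al (be+1) - \<sigma>4 * f n m al (be+1))
     - (\<sigma>1 - \<sigma>4) * f n m al be * (g (n+1) m al (be+1) - \<sigma>4 * f (n+1) m al (be+1))
     - f n m al (be+1) * h (n+1) m al be = 0
 \<and> f n (m+1) al be * (\<sigma>4^2 * f n m al (be+1) - \<sigma>4 * g n m al (be+1) + h n m al (be+1))
     + \<sigma>2 * f n (m+1) al be * (g n m al (be+1) - \<sigma>4 * f n m al (be+1))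
     - (\<sigma>2 - \<sigma>4) * f n m al be * (g n (m+1) al (be+1) - \<sigma>4 * f n (m+1) al (be+1))
     - f n m al (be+1) * h n (m+1) al be = 0
 \<and> f (n+1) m al be * (\<sigma>1 * g n m al be + h n m al be)
     - g (n+1) m al be * (\<sigma>1 * f n m al be + g n m al be) + f n m al be * s (n+1) m al be = 0
 \<and> f n (m+1) al be * (\<sigma>2 * g n m al be + h n m al be)
     - g n (m+1) al be * (\<sigma>2 * f n m al be + g n m al be) + f n m al be * s n (m+1) al be = 0
 \<and> (\<sigma>1 - \<sigma>2) * (f (n+1) m al be * f n (m+1) al be - f n m al be * f (n+1) (m+1) al be)
     + f (n+1) m al be * g n (m+1) al be - f n (m+1) al be * g (n+1) m al be = 0
 \<and> (Qpol \<epsilon>1 \<epsilon>2 \<sigma>1 \<sigma>2 * f n m al be * f (n+1) (m+1) al (be+1)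
     + s n m al be * f (n+1) (m+1) al (be+1)
     + (\<sigma>1 + \<sigma>2 + \<epsilon>1) * g n m al be * f (n+1) (m+1) al (be+1)
     - ((\<sigma>1 + \<sigma>2 + \<epsilon>1) * f n m al be + g n m al be)
         * (g (n+1) (m+1) al (be+1) - \<sigma>4 * f (n+1) (m+1) al (be+1))
     + f n m al be * (h (n+1) (m+1) al (be+1) - \<sigma>4 * g (n+1) (m+1) al (be+1)
                      + \<sigma>4^2 * f (n+1) (m+1) al (be+1))) * (\<sigma>1 - \<sigma>2)
     - Rpol \<epsilon>1 \<epsilon>2 \<epsilon>3 \<sigma>1 \<sigma>4 * f (n+1) m al be * f n (m+1) al (be+1)
     + Rpol \<epsilon>1 \<epsilon>2 \<epsilon>3 \<sigma>2 \<sigma>4 * f n (m+1) al be * f (n+1) m al (be+1) = 0"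
proof (goal_cases)
  case (1 n m al be)
  show ?case
  proof (cases "N = 0")
    case True
    have "det (mat_of_cols 0 ([] :: complex vec list)) = 1"
      using mat_of_cols_carrier(1)[of 0 "[] :: complex vec list"] by simp
    with True have "f = (\<lambda>_ _ _ _. 1)" "g = (\<lambda>_ _ _ _. 0)" "h = (\<lambda>_ _ _ _. 0)" "s = (\<lambda>_ _ _ _. 0)"
      by (simp_all add: fun_eq_iff f_def g_def h_def s_def casoratian_def)
    then show ?thesis by (simp add: Qpol_def Rpol_def algebra_simps power2_eq_square)
  next
    case False
    then have N: "0 < N" by simp
    have rows: "f n m al be = det_rows N (vec_rows N (\<phi> n m al be))"
      "g n m al be = det_g N (vec_rows N (\<phi> n m al be))"
      "h n m al be = det_h N (vec_rows N (\<phi> n m al be))"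
      "s n m al be = det_s N (vec_rows N (\<phi> n m al be))" for n m al be
      unfolding f_def g_def h_def s_def
      by (simp_all add: casoratian_f casoratian_g[OF N] casoratian_h[OF N] casoratian_s[OF N])
    have shifts: "vec_rows N (\<phi> (n+1) m al be) = shift_rows \<sigma>1 (vec_rows N (\<phi> n m al be))"
      "vec_rows N (\<phi> n (m+1) al be) = shift_rows \<sigma>2 (vec_rows N (\<phi> n m al be))"
      "vec_rows N (\<phi> n m al (be+1)) = shift_rows \<sigma>4 (vec_rows N (\<phi> n m al be))" for n m al be
      using cn[of "n+1"] cm[of _ "m+1"] cb[of _ _ _ "be+1"] by (simp_all add: vec_rows_shift dim)
    show ?thesis
      unfolding rows shifts(1) unfolding shifts(2) unfolding shifts(3)
      by (intro conjI bilinear_fg_two_shifts[OF N] bilinear_fgh_two_shifts[OF N]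
          bilinear_fghs_one_shift[OF N] bilinear_fg_symmetric[OF N] bilinear_K_three_shifts[OF N vec_rows_matrix[OF dim K cK]])
  qed
qed

end
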